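(* Let $\mathcal{H}$ be a complex separable Hilbert space and $A\in\mathcal{B}(\mathcal{H})$ with an orthonormal basis $\{e_j\}_{j\in J}$ of eigenvectors, $Ae_j=-\lambda_je_j$, where $\lambda_j\in\mathbb{C}_+$ for all $j$. Let $I$ be a countable index set and $g^i\in\mathcal{H}$ for $i\in I$. Let $B:=(I_{\mathcal{H}}+A)(I_{\mathcal{H}}-A)^{-1}\in\mathcal{B}(\mathcal{H})$, i.e. $Be_j=\mathfrak{h}(\lambda_j)e_j$, and let $a^i\in\mathcal{H}$ be defined by $\langle a^i,e_j\rangle=\frac{\sqrt2}{1+\lambda_j}\langle g^i,e_j\rangle$ for all $j$ (equivalently $a^i=\sqrt2(I_{\mathcal{H}}-A)^{-1}g^i$). Then $\{e^{tA}g^i\}_{i\in I,\,t\in[0,\infty)}$ is a semi-continuous frame for $\mathcal{H}$ if and only if $\{B^na^i\}_{i\in I,\,n\in\mathbb{N}\cup\{0\}}$ is a frame for $\mathcal{H}$.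
   Context: $\mathbb{C}_+=\{z:\mathrm{Re}\,z>0\}$, $\mathbb{D}=\{z:|z|<1\}$, and $\mathfrak{h}:\mathbb{D}\to\mathbb{C}_+$ (also $\mathbb{C}_+\to\mathbb{D}$), $\mathfrak{h}(z)=\frac{1-z}{1+z}$; $I_{\mathcal{H}}$ denotes the identity operator. $e^{tA}:=\sum_{n\ge0}\frac{t^n}{n!}A^n$. A countable family $\{f_k\}\subset\mathcal{H}$ is a frame if there are $c,C>0$ with $c\|f\|^2\le\sum_k|\langle f,f_k\rangle|^2\le C\|f\|^2$ for all $f\in\mathcal{H}$. For a countable $\mathcal{G}\subset\mathcal{H}$ and an interval $\mathcal{T}\subset[0,\infty)$, $\{e^{tA}g\}_{g\in\mathcal{G},t\in\mathcal{T}}$ is a semi-continuous frame for $\mathcal{H}$ if there are constants $c,C>0$ such that $c\|f\|^2\le\sum_{g\in\mathcal{G}}\int_{\mathcal{T}}|\langle f,e^{tA}g\rangle|^2\,dt\le C\|f\|^2$ for all $f\in\mathcal{H}$. *)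

theory Defs
  imports "HOL-Analysis.Analysis"
begin

(* The separable Hilbert space H with orthonormal eigenbasis {e_j}_{j in J} is modelled
   in coordinates w.r.t. that basis: H = l^2(J), vectors are functions 'j => complex
   vanishing off J with square-summable modulus; e_j is the j-th unit vector. *)

definition l2 :: "'j set \<Rightarrow> ('j \<Rightarrow> complex) set" where
  "l2 J = {f. (\<forall>j. j \<notin> J \<longrightarrow> f j = 0) \<and> (\<lambda>j. (cmod (f j))^2) summable_on J}"

definition l2_inner :: "'j set \<Rightarrow> ('j \<Rightarrow> complex) \<Rightarrow> ('j \<Rightarrow> complex) \<Rightarrow> complex" where
  "l2_inner J f g = (\<Sum>\<^sub>\<infinity>j\<in>J. f j * cnj (g j))"

definition l2_normsq :: "'j set \<Rightarrow> ('j \<Rightarrow> complex) \<Rightarrow> real" where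
  "l2_normsq J f = (\<Sum>\<^sub>\<infinity>j\<in>J. (cmod (f j))^2)"

definition hmap :: "complex \<Rightarrow> complex" where
  "hmap z = (1 - z) / (1 + z)"

(* A e_j = - lam j e_j; e^{tA} = sum_n t^n/n! A^n, which acts on the j-th coordinate
   by the scalar series sum_n t^n/n! (-lam j)^n *)
definition expA :: "('j \<Rightarrow> complex) \<Rightarrow> real \<Rightarrow> ('j \<Rightarrow> complex) \<Rightarrow> ('j \<Rightarrow> complex)" where
  "expA lam t g = (\<lambda>j. (\<Sum>n. (complex_of_real t ^ n / of_nat (fact n)) * (- lam j) ^ n) * g j)"

(* B e_j = h(lam j) e_j, so B^n acts on coordinate j by h(lam j)^n *)
definition Bpow :: "('j \<Rightarrow> complex) \<Rightarrow> nat \<Rightarrow> ('j \<Rightarrow> complex) \<Rightarrow> ('j \<Rightarrow> complex)" where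
  "Bpow lam n f = (\<lambda>j. hmap (lam j) ^ n * f j)"

definition avec :: "('j \<Rightarrow> complex) \<Rightarrow> ('j \<Rightarrow> complex) \<Rightarrow> ('j \<Rightarrow> complex)" where
  "avec lam g = (\<lambda>j. (complex_of_real (sqrt 2) / (1 + lam j)) * g j)"

definition is_frame :: "'j set \<Rightarrow> 'k set \<Rightarrow> ('k \<Rightarrow> 'j \<Rightarrow> complex) \<Rightarrow> bool" where
  "is_frame J K F \<longleftrightarrow> (\<exists>c C. c > 0 \<and> C > 0 \<and> (\<forall>f\<in>l2 J.
     ennreal (c * l2_normsq J f) \<le> (\<Sum>\<^sub>\<infinity>k\<in>K. ennreal ((cmod (l2_inner J f (F k)))^2)) \<and>
     (\<Sum>\<^sub>\<infinity>k\<in>K. ennreal ((cmod (l2_inner J f (F k)))^2)) \<le> ennreal (C * l2_normsq J f)))"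

definition semicont_frame :: "'j set \<Rightarrow> ('j \<Rightarrow> complex) \<Rightarrow> 'i set \<Rightarrow> ('i \<Rightarrow> 'j \<Rightarrow> complex) \<Rightarrow> real set \<Rightarrow> bool" where
  "semicont_frame J lam I g T \<longleftrightarrow> (\<exists>c C. c > 0 \<and> C > 0 \<and> (\<forall>f\<in>l2 J.
     ennreal (c * l2_normsq J f) \<le>
       (\<Sum>\<^sub>\<infinity>i\<in>I. \<integral>\<^sup>+ t\<in>T. ennreal ((cmod (l2_inner J f (expA lam t (g i))))^2) \<partial>lborel) \<and>
     (\<Sum>\<^sub>\<infinity>i\<in>I. \<integral>\<^sup>+ t\<in>T. ennreal ((cmod (l2_inner J f (expA lam t (g i))))^2) \<partial>lborel)
       \<le> ennreal (C * l2_normsq J f)))"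

end

theory Submission
  imports Defs "HOL-Real_Asymp.Real_Asymp"
begin

(* For f in l2(J) and a generator g put c_j = f_j * cnj (g_j) and mu_j = cnj (lam_j). Then
   <f, e^{tA} g> = sum_j c_j e^{-mu_j t} and <f, B^n a> = sum_j c_j k_n(mu_j), where
   k_n(z) = sqrt 2 h(z)^n / (1 + z) is, up to the sign (-1)^n, the Laplace transform at z of the
   n-th Laguerre function. So the two frame sums agree for every f, with the same constants, once
   int_0^oo |sum_j c_j e^{-mu_j t}|^2 dt = sum_n |sum_j c_j k_n(mu_j)|^2.
   For finitely many j both sides equal the Gram form sum_{j,k} c_j cnj (c_k) / (mu_j + cnj (mu_k)):
   on the left by integrating exponentials, on the right by summing a geometric series in
   h(mu_j) cnj (h(mu_k)). For infinitely many j, truncation and dominated convergence work when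
   Re mu is bounded away from 0 and |h(mu)| away from 1. In general, replacing mu by mu + eps only
   shrinks the left side, replacing h(mu) by r h(mu) with r < 1 only shrinks the right side, and
   both perturbations are uniform in the above sense; Fatou's lemma then gives the two inequalities. *)

lemma infsum_nat_ennreal_eq_suminf:
  fixes f :: "nat \<Rightarrow> ennreal"
  shows "infsum f UNIV = suminf f"
  by (rule sums_unique[OF has_sum_imp_sums[OF has_sum_infsum[OF nonneg_summable_on_complete]]]) simp

lemma sum_suminf_ennreal_eq_SUP:
  fixes f :: "'a \<times> nat \<Rightarrow> ennreal"
  assumes "finite F"
  shows "(\<Sum>a\<in>F. \<Sum>n. f (a, n)) = (SUP N. sum f (F \<times> {..<N}))"
proof -
  have "(\<Sum>a\<in>F. \<Sum>n. f (a, n)) = (\<Sum>n. \<Sum>a\<in>F. f (a, n))"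
    by (rule suminf_sum[symmetric]) simp
  also have "\<dots> = (SUP N. \<Sum>n<N. \<Sum>a\<in>F. f (a, n))"
    by (rule suminf_eq_SUP)
  also have "\<dots> = (SUP N. sum f (F \<times> {..<N}))"
    by (subst sum.swap) (simp add: sum.cartesian_product)
  finally show ?thesis .
qed

(* has_sum_SigmaD would give this at once, but it needs a t3_space, which ennreal is not
   declared to be. *)
lemma infsum_ennreal_Times_nat:
  fixes f :: "'a \<times> nat \<Rightarrow> ennreal"
  shows "infsum f (A \<times> UNIV) = (\<Sum>\<^sub>\<infinity>a\<in>A. \<Sum>n. f (a, n))"
proof -
  have "infsum f (A \<times> UNIV) = (SUP G\<in>{G. finite G \<and> G \<subseteq> A \<times> UNIV}. sum f G)"
    by (rule nonneg_infsum_complete) simp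
  also have "\<dots> = (SUP F\<in>{F. finite F \<and> F \<subseteq> A}. \<Sum>a\<in>F. \<Sum>n. f (a, n))"
  proof (rule antisym)
    show "(SUP G\<in>{G. finite G \<and> G \<subseteq> A \<times> UNIV}. sum f G)
        \<le> (SUP F\<in>{F. finite F \<and> F \<subseteq> A}. \<Sum>a\<in>F. \<Sum>n. f (a, n))"
    proof (rule SUP_least)
      fix G :: "('a \<times> nat) set"
      assume G: "G \<in> {G. finite G \<and> G \<subseteq> A \<times> UNIV}"
      then have fin: "finite G"
        by simp
      then obtain N where "snd ` G \<subseteq> {..<N}"
        using finite_nat_bounded[OF finite_imageI[OF fin, of snd]] by blast
      then have "G \<subseteq> fst ` G \<times> {..<N}"
        by force
      then have "sum f G \<le> sum f (fst ` G \<times> {..<N})"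
        using fin by (intro sum_mono2) auto
      also have "\<dots> \<le> (\<Sum>a\<in>fst ` G. \<Sum>n. f (a, n))"
        unfolding sum_suminf_ennreal_eq_SUP[OF finite_imageI[OF fin]] by (rule SUP_upper) simp
      also have "\<dots> \<le> (SUP F\<in>{F. finite F \<and> F \<subseteq> A}. \<Sum>a\<in>F. \<Sum>n. f (a, n))"
        using G by (intro SUP_upper) auto
      finally show "sum f G \<le> \<dots>" .
    qed
    show "(SUP F\<in>{F. finite F \<and> F \<subseteq> A}. \<Sum>a\<in>F. \<Sum>n. f (a, n))
        \<le> (SUP G\<in>{G. finite G \<and> G \<subseteq> A \<times> UNIV}. sum f G)"
    proof (rule SUP_least)
      fix F :: "'a set"
      assume F: "F \<in> {F. finite F \<and> F \<subseteq> A}"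
      then have "(\<Sum>a\<in>F. \<Sum>n. f (a, n)) = (SUP N. sum f (F \<times> {..<N}))"
        by (simp add: sum_suminf_ennreal_eq_SUP)
      also have "\<dots> \<le> (SUP G\<in>{G. finite G \<and> G \<subseteq> A \<times> UNIV}. sum f G)"
        using F by (intro SUP_least SUP_upper) auto
      finally show "(\<Sum>a\<in>F. \<Sum>n. f (a, n)) \<le> \<dots>" .
    qed
  qed
  also have "\<dots> = (\<Sum>\<^sub>\<infinity>a\<in>A. \<Sum>n. f (a, n))"
    by (rule nonneg_infsum_complete[symmetric]) simp
  finally show ?thesis .
qed

lemma infsum_dominated_convergence:
  fixes a :: "nat \<Rightarrow> 'j \<Rightarrow> 'b::{banach, second_countable_topology}"
  assumes b: "b summable_on A"
    and bound: "\<And>m j. j \<in> A \<Longrightarrow> norm (a m j) \<le> b j"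
    and lim: "\<And>j. j \<in> A \<Longrightarrow> (\<lambda>m. a m j) \<longlonglongrightarrow> l j"
  shows "(\<lambda>m. \<Sum>\<^sub>\<infinity>j\<in>A. a m j) \<longlonglongrightarrow> (\<Sum>\<^sub>\<infinity>j\<in>A. l j)"
proof -
  have b_integrable: "integrable (count_space A) b"
  proof -
    have "0 \<le> b j" if "j \<in> A" for j
      using bound[OF that, of 0] norm_ge_zero order_trans by blast
    then have "(\<lambda>j. norm (b j)) summable_on A"
      by (intro Infinite_Sum.abs_summable_on_comparison_test'[OF b]) simp
    with abs_summable_equivalent[of b A] show ?thesis
      unfolding Infinite_Set_Sum.abs_summable_on_def by (rule iffD1)
  qed
  have dominated: "integrable (count_space A) f \<and> integral\<^sup>L (count_space A) f = infsum f A"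
    if "\<And>j. j \<in> A \<Longrightarrow> norm (f j) \<le> b j" for f :: "'j \<Rightarrow> 'b"
    using Infinite_Sum.abs_summable_on_comparison_test'[OF b that] abs_summable_equivalent[of f A]
    by (simp add: Infinite_Set_Sum.abs_summable_on_def infsetsum_def[symmetric] infsetsum_infsum)
  have l_bound: "norm (l j) \<le> b j" if "j \<in> A" for j
    using lim[OF that] bound[OF that] by (intro LIMSEQ_le_const2[OF tendsto_norm]) auto
  have "(\<lambda>m. integral\<^sup>L (count_space A) (a m)) \<longlonglongrightarrow> integral\<^sup>L (count_space A) l"
    using b_integrable lim bound dominated[OF l_bound]
    by (intro integral_dominated_convergence[where w = b]) (auto simp: AE_count_space)
  then show ?thesis
    using dominated[OF bound] dominated[OF l_bound] by simp
qed

lemma nn_integral_le_of_tendsto: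
  fixes f :: "nat \<Rightarrow> 'a \<Rightarrow> ennreal"
  assumes meas: "\<And>m. f m \<in> borel_measurable M"
    and lim: "\<And>x. (\<lambda>m. f m x) \<longlonglongrightarrow> g x"
    and bound: "\<And>m. (\<integral>\<^sup>+x. f m x \<partial>M) \<le> B"
  shows "(\<integral>\<^sup>+x. g x \<partial>M) \<le> B"
proof -
  have "(\<integral>\<^sup>+x. g x \<partial>M) = (\<integral>\<^sup>+x. liminf (\<lambda>m. f m x) \<partial>M)"
    using lim by (intro nn_integral_cong) (metis lim_imp_Liminf trivial_limit_sequentially)
  also have "\<dots> \<le> liminf (\<lambda>m. \<integral>\<^sup>+x. f m x \<partial>M)"
    by (rule nn_integral_liminf[OF meas])
  also have "\<dots> \<le> B"
    using bound by (intro Liminf_le) auto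
  finally show ?thesis .
qed

lemma countable_finite_exhaustion:
  assumes "countable A"
  obtains F :: "nat \<Rightarrow> 'a set" where "\<And>m. finite (F m)" "\<And>m. F m \<subseteq> A"
    "\<And>x. x \<in> A \<Longrightarrow> eventually (\<lambda>m. x \<in> F m) sequentially"
proof
  define F where "F m = A \<inter> from_nat_into A ` {..<m}" for m
  show "finite (F m)" "F m \<subseteq> A" for m
    by (auto simp: F_def)
  show "eventually (\<lambda>m. x \<in> F m) sequentially" if "x \<in> A" for x
  proof (rule eventually_mono[OF eventually_gt_at_top[of "to_nat_on A x"]])
    fix m assume "to_nat_on A x < m"
    then have "from_nat_into A (to_nat_on A x) \<in> from_nat_into A ` {..<m}"
      by simp
    then show "x \<in> F m"
      using that unfolding F_def from_nat_into_to_nat_on[OF assms that] by simp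
  qed
qed

lemma norm_sum_squared: "(cmod (sum a F))^2 = Re (\<Sum>j\<in>F. \<Sum>k\<in>F. a j * cnj (a k))"
proof -
  have "complex_of_real ((cmod (sum a F))^2) = sum a F * cnj (sum a F)"
    by (rule complex_norm_square)
  also have "\<dots> = (\<Sum>j\<in>F. \<Sum>k\<in>F. a j * cnj (a k))"
    by (simp add: cnj_sum sum_product)
  finally show ?thesis by (metis Re_complex_of_real)
qed

lemma norm_exp_minus_le:
  assumes "d \<le> Re z" "0 \<le> t"
  shows "cmod (exp (- z * complex_of_real t)) \<le> exp (- d * t)"
  using assms by (simp add: norm_exp_eq_Re mult_right_mono)

lemma exp_has_integral_interval:
  assumes "0 \<le> b" "a \<noteq> 0"
  shows "((\<lambda>t. exp (a * complex_of_real t)) has_integral (exp (a * of_real b) - 1) / a) {0..b}"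
proof -
  have "((\<lambda>x. exp (a * x) / a) has_vector_derivative exp (a * t)) (at t within {0..b})" if "t \<in> {0..b}" for t
    using assms
    by (intro derivative_eq_intros has_complex_derivative_imp_has_vector_derivative[unfolded o_def] | simp)+
  then have "((\<lambda>t. exp (a * of_real t)) has_integral exp (a * complex_of_real b) / a - exp (a * of_real 0) / a) {0..b}"
    by (meson fundamental_theorem_of_calculus \<open>0 \<le> b\<close>)
  then show ?thesis
    by (simp add: diff_divide_distrib)
qed

lemma exp_absolutely_integrable_nonneg_reals:
  assumes "0 < Re z"
  shows "(\<lambda>t. exp (- z * complex_of_real t)) absolutely_integrable_on {0..}"
proof (rule measurable_bounded_by_integrable_imp_absolutely_integrable[where g = "\<lambda>t. exp (- Re z * t)"])
  have "continuous_on UNIV (\<lambda>t. exp (- z * complex_of_real t))"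
    by (intro continuous_intros)
  then show "(\<lambda>t. exp (- z * complex_of_real t)) \<in> borel_measurable (lebesgue_on {0..})"
    by (intro continuous_imp_measurable_on_sets_lebesgue) (auto intro: continuous_on_subset)
  show "(\<lambda>t. exp (- Re z * t)) integrable_on {0..}"
    using integrable_on_exp_minus_to_infinity[of "Re z" 0] assms by simp
  show "norm (exp (- z * complex_of_real t)) \<le> exp (- Re z * t)" for t
    by (simp add: norm_exp_eq_Re)
qed simp

lemma exp_has_integral_nonneg_reals:
  assumes z: "0 < Re z"
  shows "((\<lambda>t. exp (- z * complex_of_real t)) has_integral 1 / z) {0..}"
proof -
  define f where "f t = exp (- z * complex_of_real t)" for t
  have nz: "z \<noteq> 0"
    using z by auto
  have f_integrable: "f absolutely_integrable_on {0..}"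
    unfolding f_def using z by (rule exp_absolutely_integrable_nonneg_reals)
  have partial: "set_lebesgue_integral lebesgue {0..b} f = (exp (- z * of_real b) - 1) / (- z)"
    if "0 \<le> b" for b
  proof -
    have "f absolutely_integrable_on {0..b}"
      using f_integrable by (rule set_integrable_subset) auto
    from set_lebesgue_integral_eq_integral(2)[OF this]
    show ?thesis
      using exp_has_integral_interval[OF that, of "- z"] nz unfolding f_def
      by (simp add: integral_unique)
  qed
  have "((\<lambda>b. set_lebesgue_integral lebesgue {0..b} f) \<longlongrightarrow> set_lebesgue_integral lebesgue {0..} f) at_top"
    by (rule tendsto_set_lebesgue_integral_at_top) (use f_integrable in auto)
  moreover have "((\<lambda>b. set_lebesgue_integral lebesgue {0..b} f) \<longlongrightarrow> (0 - 1) / (- z)) at_top"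
  proof -
    have "((\<lambda>b::real. exp (- Re z * b)) \<longlongrightarrow> 0) at_top"
      using z by real_asymp
    then have "((\<lambda>b::real. norm (exp (- z * of_real b))) \<longlongrightarrow> 0) at_top"
      by (simp add: norm_exp_eq_Re)
    then have "((\<lambda>b::real. exp (- z * of_real b)) \<longlongrightarrow> 0) at_top"
      by (rule tendsto_norm_zero_cancel)
    then have "((\<lambda>b. (exp (- z * of_real b) - 1) / (- z)) \<longlongrightarrow> (0 - 1) / (- z)) at_top"
      by (rule tendsto_divide[OF tendsto_diff[OF _ tendsto_const] tendsto_const]) (use nz in simp)
    moreover have "eventually (\<lambda>b. (exp (- z * of_real b) - 1) / (- z)
        = set_lebesgue_integral lebesgue {0..b} f) at_top"
      using eventually_ge_at_top[of 0] by eventually_elim (simp add: partial)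
    ultimately show ?thesis
      by (rule Lim_transform_eventually)
  qed
  ultimately have "set_lebesgue_integral lebesgue {0..} f = 1 / z"
    using tendsto_unique[OF trivial_limit_at_top_linorder] by fastforce
  then show ?thesis
    using set_lebesgue_integral_eq_integral[OF f_integrable] unfolding f_def
    by (metis has_integral_integrable_integral)
qed

section \<open>The Cayley transform\<close>

lemma hmap_cnj: "cnj (hmap z) = hmap (cnj z)"
  by (simp add: hmap_def)

lemma one_plus_neq_zero_of_Re_nonneg: "0 \<le> Re z \<Longrightarrow> 1 + z \<noteq> 0"
  by (auto simp: complex_eq_iff)

lemma one_plus_neq_zero_of_norm_less: "cmod z < 1 \<Longrightarrow> 1 + z \<noteq> 0"
  by (auto simp: add_eq_0_iff)

lemma one_le_norm_one_plus: "0 \<le> Re z \<Longrightarrow> 1 \<le> cmod (1 + z)"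
  using complex_Re_le_cmod[of "1 + z"] by simp

lemma hmap_hmap: "1 + z \<noteq> 0 \<Longrightarrow> hmap (hmap z) = z"
proof -
  assume nz: "1 + z \<noteq> 0"
  have "1 - hmap z = 2 * z / (1 + z)" "1 + hmap z = 2 / (1 + z)"
    using nz by (simp_all add: hmap_def field_simps)
  then show ?thesis using nz by (simp add: hmap_def)
qed

lemma one_plus_hmap: "1 + z \<noteq> 0 \<Longrightarrow> 1 + hmap z = 2 / (1 + z)"
  by (simp add: hmap_def field_simps)

lemma norm_hmap_squared: "1 + z \<noteq> 0 \<Longrightarrow> (cmod (hmap z))^2 = 1 - 4 * Re z / (cmod (1 + z))^2"
proof -
  assume nz: "1 + z \<noteq> 0"
  have "(cmod (1 - z))^2 = (cmod (1 + z))^2 - 4 * Re z"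
    by (simp only: cmod_power2) (simp add: power2_eq_square algebra_simps)
  then show ?thesis
    using nz by (simp add: hmap_def norm_divide power_divide field_simps)
qed

lemma Re_hmap: "1 + z \<noteq> 0 \<Longrightarrow> Re (hmap z) = (1 - (cmod z)^2) / (cmod (1 + z))^2"
  unfolding hmap_def Re_divide by (simp only: cmod_power2) (simp add: power2_eq_square algebra_simps)

lemma norm_hmap_le_one: "0 \<le> Re z \<Longrightarrow> cmod (hmap z) \<le> 1"
proof -
  assume "0 \<le> Re z"
  then have "(cmod (hmap z))^2 \<le> 1"
    using norm_hmap_squared[OF one_plus_neq_zero_of_Re_nonneg] by simp
  then show ?thesis by (simp add: power_le_one_iff abs_le_square_iff[symmetric])
qed

lemma norm_hmap_less_one: "0 < Re z \<Longrightarrow> cmod (hmap z) < 1"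
proof -
  assume pos: "0 < Re z"
  then have "1 + z \<noteq> 0" by (intro one_plus_neq_zero_of_Re_nonneg) simp
  then have "(cmod (hmap z))^2 < 1"
    using pos norm_hmap_squared by simp
  then show ?thesis
    by (simp add: power_less_one_iff abs_square_less_1)
qed

lemma norm_hmap_le_of_Re_ge:
  assumes d: "0 < d" "d \<le> Re z" and M: "cmod z \<le> M"
  shows "cmod (hmap z) \<le> 1 - 2 * d / (1 + M)^2"
proof -
  define y where "y = 2 * d / (1 + M)^2"
  have nz: "1 + z \<noteq> 0"
    using d by (intro one_plus_neq_zero_of_Re_nonneg) simp
  have "d \<le> M"
    using d M complex_Re_le_cmod[of z] by linarith
  moreover have "(1 + M)^2 = 1 + 2 * M + M^2"
    by (simp add: power2_eq_square algebra_simps)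
  ultimately have dM: "2 * d \<le> (1 + M)^2"
    using zero_le_power2[of M] by linarith
  then have y: "0 \<le> y" "y \<le> 1"
    using d unfolding y_def by (simp_all add: divide_le_eq)
  have "cmod (1 + z) \<le> 1 + M"
    using norm_triangle_ineq[of 1 z] M by simp
  then have "(cmod (1 + z))^2 \<le> (1 + M)^2"
    by (rule power_mono) simp
  then have "4 * d / (1 + M)^2 \<le> 4 * Re z / (cmod (1 + z))^2"
    using d nz by (intro frac_le) auto
  moreover have "2 * y = 4 * d / (1 + M)^2"
    by (simp add: y_def)
  ultimately have "(cmod (hmap z))^2 \<le> 1 - 2 * y"
    using norm_hmap_squared[OF nz] by simp
  also have "\<dots> \<le> (1 - y)^2"
    by (simp add: power2_eq_square algebra_simps)
  finally have "cmod (hmap z) \<le> 1 - y"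
    by (rule power2_le_imp_le) (use y in simp)
  then show ?thesis by (simp add: y_def)
qed

lemma norm_hmap_uniform_bound:
  assumes "0 < d" "d \<le> M"
  obtains q where "0 \<le> q" "q < 1" "\<And>z. d \<le> Re z \<Longrightarrow> cmod z \<le> M \<Longrightarrow> cmod (hmap z) \<le> q"
proof
  show "\<And>z. d \<le> Re z \<Longrightarrow> cmod z \<le> M \<Longrightarrow> cmod (hmap z) \<le> 1 - 2 * d / (1 + M)^2"
    using assms(1) by (rule norm_hmap_le_of_Re_ge)
  have "(1 + M)^2 = 1 + 2 * M + M^2"
    by (simp add: power2_eq_square algebra_simps)
  then have "2 * d \<le> (1 + M)^2"
    using assms zero_le_power2[of M] by linarith
  then show "0 \<le> 1 - 2 * d / (1 + M)^2"
    using assms by (simp add: divide_le_eq)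
  show "1 - 2 * d / (1 + M)^2 < 1"
    using assms by simp
qed

lemma Re_hmap_ge:
  assumes "cmod z \<le> r" "r < 1"
  shows "(1 - r^2) / 4 \<le> Re (hmap z)"
proof -
  have z: "cmod z < 1" using assms by simp
  have "cmod (1 + z) \<le> 2" using norm_triangle_ineq[of 1 z] z by simp
  then have "(cmod (1 + z))^2 \<le> 2^2" by (intro power_mono) auto
  moreover have "0 < cmod (1 + z)" using one_plus_neq_zero_of_norm_less[OF z] by simp
  moreover have "1 - r^2 \<le> 1 - (cmod z)^2" "0 \<le> 1 - (cmod z)^2"
    using assms z by (auto simp: power_mono power_le_one)
  ultimately have "(1 - r^2) / 4 \<le> (1 - (cmod z)^2) / (cmod (1 + z))^2"
    by (intro frac_le) auto
  then show ?thesis using Re_hmap[OF one_plus_neq_zero_of_norm_less[OF z]] by simp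
qed

lemma hmap_gram_identity:
  assumes "1 + z \<noteq> 0" "1 + w \<noteq> 0" "z + w \<noteq> 0"
  shows "2 / ((1 + z) * (1 + w)) / (1 - hmap z * hmap w) = 1 / (z + w)"
proof -
  have cancel: "D * (1 - X / D) = D - X" if "D \<noteq> 0" for D X :: complex
    using that by (simp add: field_simps)
  have "(1 + z) * (1 + w) * (1 - hmap z * hmap w) = (1 + z) * (1 + w) - (1 - z) * (1 - w)"
    unfolding hmap_def times_divide_times_eq using assms by (intro cancel) simp
  also have "\<dots> = 2 * (z + w)" by (simp add: algebra_simps)
  finally have "(1 + z) * (1 + w) * (1 - hmap z * hmap w) = 2 * (z + w)" .
  then have "2 / ((1 + z) * (1 + w)) / (1 - hmap z * hmap w) = 2 / (2 * (z + w))"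
    by (simp only: divide_divide_eq_left)
  also have "\<dots> = 1 / (z + w)"
    by (rule nonzero_divide_mult_cancel_left) simp
  finally show ?thesis .
qed

definition cayley_rescale :: "real \<Rightarrow> complex \<Rightarrow> complex" where
  "cayley_rescale r z = hmap (of_real r * hmap z)"

definition cayley_rescale_factor :: "real \<Rightarrow> complex \<Rightarrow> complex" where
  "cayley_rescale_factor r z = (1 + hmap z) / (1 + of_real r * hmap z)"

lemma norm_scaled_hmap_le:
  assumes "0 < Re z" "0 \<le> r"
  shows "cmod (of_real r * hmap z) \<le> r"
  using norm_hmap_less_one[OF assms(1)] assms(2) by (simp add: norm_mult mult_left_le)

lemma norm_hmap_cayley_rescale:
  assumes "0 < Re z" "0 \<le> r" "r < 1"
  shows "cmod (hmap (cayley_rescale r z)) \<le> r"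
proof -
  have "1 + of_real r * hmap z \<noteq> 0"
    using norm_scaled_hmap_le[OF assms(1,2)] assms(3)
    by (intro one_plus_neq_zero_of_norm_less) linarith
  then show ?thesis
    using norm_scaled_hmap_le[OF assms(1,2)] by (simp add: cayley_rescale_def hmap_hmap)
qed

lemma Re_cayley_rescale_ge:
  assumes "0 < Re z" "0 \<le> r" "r < 1"
  shows "(1 - r^2) / 4 \<le> Re (cayley_rescale r z)"
  unfolding cayley_rescale_def using norm_scaled_hmap_le[OF assms(1,2)] assms(3) by (rule Re_hmap_ge)

lemma norm_cayley_rescale_factor_le:
  assumes z: "0 < Re z" and r: "0 < r" "r < 1"
  shows "cmod (cayley_rescale_factor r z) \<le> 2"
proof -
  define w where "w = hmap z"
  have w: "cmod w < 1"
    using norm_hmap_less_one[OF z] by (simp add: w_def)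
  have "1 - r * cmod w \<le> cmod (1 + of_real r * w)"
    using norm_diff_ineq[of 1 "of_real r * w"] r by (simp add: norm_mult)
  moreover have "r * cmod w \<le> r"
    using w r by (intro mult_left_le) auto
  ultimately have "1 - r \<le> cmod (1 + of_real r * w)"
    by linarith
  moreover have "cmod (1 + w) \<le> cmod (1 + of_real r * w) + (1 - r)"
  proof -
    have "cmod (1 + w) = cmod ((1 + of_real r * w) + of_real (1 - r) * w)"
      by (simp add: algebra_simps)
    also have "\<dots> \<le> cmod (1 + of_real r * w) + cmod (of_real (1 - r) * w)"
      by (rule norm_triangle_ineq)
    also have "\<dots> = cmod (1 + of_real r * w) + (1 - r) * cmod w"
      using r by (simp add: norm_mult del: of_real_diff)
    also have "\<dots> \<le> cmod (1 + of_real r * w) + (1 - r)"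
      using w r by (simp add: mult_left_le)
    finally show ?thesis .
  qed
  ultimately show ?thesis
    using r by (simp add: cayley_rescale_factor_def w_def[symmetric] norm_divide divide_le_eq)
qed

lemma cayley_rescale_tendsto:
  assumes z: "0 < Re z" and r: "r \<longlonglongrightarrow> 1"
  shows "(\<lambda>m. cayley_rescale (r m) z) \<longlonglongrightarrow> z"
    and "(\<lambda>m. cayley_rescale_factor (r m) z) \<longlonglongrightarrow> 1"
proof -
  have nz: "1 + hmap z \<noteq> 0"
    using norm_hmap_less_one[OF z] by (rule one_plus_neq_zero_of_norm_less)
  have r': "(\<lambda>m. complex_of_real (r m)) \<longlonglongrightarrow> 1"
    using tendsto_of_real[OF r] by simp
  have "(\<lambda>m. hmap (of_real (r m) * w)) \<longlonglongrightarrow> hmap (1 * w)" if "1 + w \<noteq> 0" for w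
    unfolding hmap_def using that by (intro tendsto_intros r') auto
  from this[OF nz] show "(\<lambda>m. cayley_rescale (r m) z) \<longlonglongrightarrow> z"
    using hmap_hmap[OF one_plus_neq_zero_of_Re_nonneg] z by (simp add: cayley_rescale_def less_imp_le)
  have "(\<lambda>m. cayley_rescale_factor (r m) z) \<longlonglongrightarrow> (1 + hmap z) / (1 + 1 * hmap z)"
    unfolding cayley_rescale_factor_def using nz by (intro tendsto_intros r') auto
  with nz show "(\<lambda>m. cayley_rescale_factor (r m) z) \<longlonglongrightarrow> 1"
    by simp
qed

definition cayley_kernel :: "complex \<Rightarrow> nat \<Rightarrow> complex" where
  "cayley_kernel z n = complex_of_real (sqrt 2) * hmap z ^ n / (1 + z)"

lemma norm_cayley_kernel_le:
  assumes "0 \<le> Re z"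
  shows "cmod (cayley_kernel z n) \<le> sqrt 2 * cmod (hmap z) ^ n"
proof -
  have "cmod (cayley_kernel z n) = sqrt 2 * cmod (hmap z) ^ n / cmod (1 + z)"
    by (simp add: cayley_kernel_def norm_mult norm_divide norm_power)
  also have "\<dots> \<le> sqrt 2 * cmod (hmap z) ^ n / 1"
    using one_le_norm_one_plus[OF assms] by (intro divide_left_mono) auto
  finally show ?thesis by simp
qed

lemma norm_cayley_kernel_le_sqrt2:
  assumes "0 \<le> Re z"
  shows "cmod (cayley_kernel z n) \<le> sqrt 2"
proof -
  have "cmod (hmap z) ^ n \<le> 1"
    using norm_hmap_le_one[OF assms] by (simp add: power_le_one)
  then have "sqrt 2 * cmod (hmap z) ^ n \<le> sqrt 2"
    by (intro mult_left_le) auto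
  with norm_cayley_kernel_le[OF assms, of n] show ?thesis by linarith
qed

lemma cayley_kernel_product_sums:
  assumes z: "0 < Re z" and w: "0 < Re w"
  shows "(\<lambda>n. cayley_kernel z n * cnj (cayley_kernel w n)) sums (1 / (z + cnj w))"
proof -
  have nz: "1 + z \<noteq> 0" "1 + cnj w \<noteq> 0" "z + cnj w \<noteq> 0"
    using z w by (auto intro!: one_plus_neq_zero_of_Re_nonneg simp: complex_eq_iff)
  have "cmod (hmap z) * cmod (hmap (cnj w)) < 1 * 1"
    using norm_hmap_less_one[OF z] norm_hmap_less_one[of "cnj w"] w
    by (intro mult_strict_mono') auto
  then have "cmod (hmap z * hmap (cnj w)) < 1"
    by (simp add: norm_mult)
  then have "(\<lambda>n. (hmap z * hmap (cnj w)) ^ n) sums (1 / (1 - hmap z * hmap (cnj w)))"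
    by (rule geometric_sums)
  then have "(\<lambda>n. 2 / ((1 + z) * (1 + cnj w)) * (hmap z * hmap (cnj w)) ^ n)
      sums (2 / ((1 + z) * (1 + cnj w)) * (1 / (1 - hmap z * hmap (cnj w))))"
    by (rule sums_mult)
  moreover have "cayley_kernel z n * cnj (cayley_kernel w n)
      = 2 / ((1 + z) * (1 + cnj w)) * (hmap z * hmap (cnj w)) ^ n" for n
  proof -
    have "complex_of_real (sqrt 2) * complex_of_real (sqrt 2) = 2"
      by (simp flip: of_real_mult)
    then show ?thesis
      by (simp add: cayley_kernel_def hmap_cnj power_mult_distrib field_simps)
  qed
  ultimately show ?thesis
    using hmap_gram_identity[OF nz] by simp
qed

lemma cayley_kernel_rescale:
  assumes z: "0 < Re z" and r: "0 \<le> r" "r < 1"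
  shows "cayley_rescale_factor r z * cayley_kernel (cayley_rescale r z) n = of_real (r ^ n) * cayley_kernel z n"
proof -
  define w where "w = hmap z"
  have nz_w: "1 + w \<noteq> 0"
    using norm_hmap_less_one[OF z] unfolding w_def by (rule one_plus_neq_zero_of_norm_less)
  have nz_rw: "1 + of_real r * w \<noteq> 0"
    using norm_scaled_hmap_le[OF z r(1)] r(2) unfolding w_def
    by (intro one_plus_neq_zero_of_norm_less) linarith
  have one_plus_z: "1 + z = 2 / (1 + w)"
    using one_plus_hmap[OF nz_w] hmap_hmap[OF one_plus_neq_zero_of_Re_nonneg] z
    by (simp add: w_def less_imp_le)
  have cancel: "a / b * (X / (2 / b)) = X * a / 2" if "b \<noteq> 0" for a b X :: complex
    using that by (simp add: field_simps)
  show ?thesis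
    unfolding cayley_rescale_factor_def cayley_rescale_def cayley_kernel_def w_def[symmetric]
      hmap_hmap[OF nz_rw] one_plus_hmap[OF nz_rw] one_plus_z cancel[OF nz_rw]
    by (simp add: power_mult_distrib mult_ac)
qed

section \<open>Exponential sums and their Laguerre coefficients\<close>

definition exp_sum :: "('j \<Rightarrow> complex) \<Rightarrow> ('j \<Rightarrow> complex) \<Rightarrow> 'j set \<Rightarrow> real \<Rightarrow> complex" where
  "exp_sum c mu A t = (\<Sum>\<^sub>\<infinity>j\<in>A. c j * exp (- mu j * complex_of_real t))"

definition cayley_sum :: "('j \<Rightarrow> complex) \<Rightarrow> ('j \<Rightarrow> complex) \<Rightarrow> 'j set \<Rightarrow> nat \<Rightarrow> complex" where
  "cayley_sum c mu A n = (\<Sum>\<^sub>\<infinity>j\<in>A. c j * cayley_kernel (mu j) n)"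

definition exp_sum_energy :: "('j \<Rightarrow> complex) \<Rightarrow> ('j \<Rightarrow> complex) \<Rightarrow> 'j set \<Rightarrow> ennreal" where
  "exp_sum_energy c mu A = (\<integral>\<^sup>+t\<in>{0..}. ennreal ((cmod (exp_sum c mu A t))^2) \<partial>lborel)"

definition cayley_sum_energy :: "('j \<Rightarrow> complex) \<Rightarrow> ('j \<Rightarrow> complex) \<Rightarrow> 'j set \<Rightarrow> ennreal" where
  "cayley_sum_energy c mu A = (\<Sum>\<^sub>\<infinity>n\<in>UNIV. ennreal ((cmod (cayley_sum c mu A n))^2))"

lemma exp_sum_energy_eq_nn_integral:
  "exp_sum_energy c mu A = (\<integral>\<^sup>+t. ennreal (indicator {0..} t * (cmod (exp_sum c mu A t))^2) \<partial>lborel)"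
  unfolding exp_sum_energy_def by (intro nn_integral_cong) (auto simp: indicator_def)

lemma cayley_sum_energy_eq_nn_integral:
  "cayley_sum_energy c mu A = (\<integral>\<^sup>+n. ennreal ((cmod (cayley_sum c mu A n))^2) \<partial>count_space UNIV)"
  unfolding cayley_sum_energy_def infsum_nat_ennreal_eq_suminf
  by (simp add: nn_integral_count_space_nat)

lemma exp_sum_restrict:
  "F \<subseteq> A \<Longrightarrow> exp_sum (\<lambda>j. if j \<in> F then c j else 0) mu A = exp_sum c mu F"
  unfolding exp_sum_def by (intro ext infsum_cong_neutral) auto

lemma cayley_sum_restrict:
  "F \<subseteq> A \<Longrightarrow> cayley_sum (\<lambda>j. if j \<in> F then c j else 0) mu A = cayley_sum c mu F"
  unfolding cayley_sum_def by (intro ext infsum_cong_neutral) auto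

lemma exp_sum_shift:
  "exp_sum c (\<lambda>j. mu j + of_real e) A t = exp (- of_real (e * t)) * exp_sum c mu A t"
  unfolding exp_sum_def
  by (subst infsum_cmult_right'[symmetric], intro infsum_cong)
     (simp add: exp_add[symmetric] algebra_simps)

lemma exp_sum_energy_finite:
  assumes F: "finite F" and pos: "\<forall>j\<in>F. 0 < Re (mu j)"
  shows "exp_sum_energy c mu F = ennreal (Re (\<Sum>j\<in>F. \<Sum>k\<in>F. c j * cnj (c k) / (mu j + cnj (mu k))))"
proof -
  define g where
    "g t = (\<Sum>j\<in>F. \<Sum>k\<in>F. c j * cnj (c k) * exp (- (mu j + cnj (mu k)) * complex_of_real t))" for t
  have square: "(cmod (exp_sum c mu F t))^2 = Re (g t)" for t
  proof -
    have "(cmod (exp_sum c mu F t))^2 = Re (\<Sum>j\<in>F. \<Sum>k\<in>F.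
        (c j * exp (- mu j * complex_of_real t)) * cnj (c k * exp (- mu k * complex_of_real t)))"
      unfolding exp_sum_def infsum_finite[OF F] by (rule norm_sum_squared)
    also have "\<dots> = Re (g t)"
      unfolding g_def
      by (intro arg_cong[where f = Re] sum.cong refl) (simp add: exp_cnj exp_add[symmetric] algebra_simps)
    finally show ?thesis .
  qed
  have "(g has_integral (\<Sum>j\<in>F. \<Sum>k\<in>F. c j * cnj (c k) * (1 / (mu j + cnj (mu k))))) {0..}"
    unfolding g_def using pos
    by (intro has_integral_sum[OF F] ballI has_integral_mult_right exp_has_integral_nonneg_reals)
       (simp add: add_pos_pos)
  from has_integral_linear[OF this bounded_linear_Re]
  have "((\<lambda>t. Re (g t)) has_integral Re (\<Sum>j\<in>F. \<Sum>k\<in>F. c j * cnj (c k) / (mu j + cnj (mu k)))) {0..}"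
    by (simp add: o_def)
  then have "(\<integral>\<^sup>+t. ennreal (Re (g t)) * indicator {0..} t \<partial>lborel)
      = ennreal (Re (\<Sum>j\<in>F. \<Sum>k\<in>F. c j * cnj (c k) / (mu j + cnj (mu k))))"
    by (rule nn_integral_has_integral_lebesgue'[rotated]) (simp add: square[symmetric])
  then show ?thesis
    unfolding exp_sum_energy_def square .
qed

lemma cayley_sum_energy_finite:
  assumes F: "finite F" and pos: "\<forall>j\<in>F. 0 < Re (mu j)"
  shows "cayley_sum_energy c mu F = ennreal (Re (\<Sum>j\<in>F. \<Sum>k\<in>F. c j * cnj (c k) / (mu j + cnj (mu k))))"
proof -
  define a where "a n j = c j * cayley_kernel (mu j) n" for n j
  have square: "(cmod (cayley_sum c mu F n))^2 = Re (\<Sum>j\<in>F. \<Sum>k\<in>F. a n j * cnj (a n k))" for n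
    unfolding cayley_sum_def infsum_finite[OF F] a_def[symmetric] by (rule norm_sum_squared)
  have "(\<lambda>n. a n j * cnj (a n k)) sums (c j * cnj (c k) / (mu j + cnj (mu k)))"
    if "j \<in> F" "k \<in> F" for j k
  proof -
    have "(\<lambda>n. c j * cnj (c k) * (cayley_kernel (mu j) n * cnj (cayley_kernel (mu k) n)))
        sums (c j * cnj (c k) * (1 / (mu j + cnj (mu k))))"
      using pos that by (intro sums_mult cayley_kernel_product_sums) auto
    then show ?thesis
      by (simp add: a_def mult_ac)
  qed
  then have "(\<lambda>n. \<Sum>j\<in>F. \<Sum>k\<in>F. a n j * cnj (a n k))
      sums (\<Sum>j\<in>F. \<Sum>k\<in>F. c j * cnj (c k) / (mu j + cnj (mu k)))"
    by (intro sums_sum) auto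
  then have sums: "(\<lambda>n. (cmod (cayley_sum c mu F n))^2)
      sums Re (\<Sum>j\<in>F. \<Sum>k\<in>F. c j * cnj (c k) / (mu j + cnj (mu k)))"
    unfolding square by (rule sums_Re)
  have "cayley_sum_energy c mu F = (\<Sum>n. ennreal ((cmod (cayley_sum c mu F n))^2))"
    unfolding cayley_sum_energy_def by (rule infsum_nat_ennreal_eq_suminf)
  also have "\<dots> = ennreal (\<Sum>n. (cmod (cayley_sum c mu F n))^2)"
    by (rule suminf_ennreal2) (use sums_summable[OF sums] in auto)
  also have "\<dots> = ennreal (Re (\<Sum>j\<in>F. \<Sum>k\<in>F. c j * cnj (c k) / (mu j + cnj (mu k))))"
    using sums_unique[OF sums] by simp
  finally show ?thesis .
qed

lemma exp_sum_tendsto: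
  assumes b: "b summable_on A"
    and bound: "\<And>m j. j \<in> A \<Longrightarrow> cmod (c m j) \<le> b j"
    and Re_nonneg: "\<And>m j. j \<in> A \<Longrightarrow> 0 \<le> Re (mu m j)"
    and c_lim: "\<And>j. j \<in> A \<Longrightarrow> (\<lambda>m. c m j) \<longlonglongrightarrow> c0 j"
    and mu_lim: "\<And>j. j \<in> A \<Longrightarrow> (\<lambda>m. mu m j) \<longlonglongrightarrow> mu0 j"
    and t: "0 \<le> t"
  shows "(\<lambda>m. exp_sum (c m) (mu m) A t) \<longlonglongrightarrow> exp_sum c0 mu0 A t"
  unfolding exp_sum_def
proof (rule infsum_dominated_convergence[OF b])
  fix m j assume j: "j \<in> A"
  have "cmod (exp (- mu m j * complex_of_real t)) \<le> 1"
    using norm_exp_minus_le[OF Re_nonneg[OF j] t] by simp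
  then have "cmod (c m j) * cmod (exp (- mu m j * complex_of_real t)) \<le> cmod (c m j)"
    by (intro mult_left_le) auto
  then show "norm (c m j * exp (- mu m j * complex_of_real t)) \<le> b j"
    using bound[OF j, of m] unfolding norm_mult by linarith
next
  fix j assume "j \<in> A"
  then show "(\<lambda>m. c m j * exp (- mu m j * complex_of_real t)) \<longlonglongrightarrow> c0 j * exp (- mu0 j * complex_of_real t)"
    by (intro tendsto_intros c_lim mu_lim)
qed

lemma cayley_sum_tendsto:
  assumes b: "b summable_on A"
    and bound: "\<And>m j. j \<in> A \<Longrightarrow> cmod (c m j) \<le> b j"
    and Re_nonneg: "\<And>m j. j \<in> A \<Longrightarrow> 0 \<le> Re (mu m j)" "\<And>j. j \<in> A \<Longrightarrow> 0 \<le> Re (mu0 j)"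
    and c_lim: "\<And>j. j \<in> A \<Longrightarrow> (\<lambda>m. c m j) \<longlonglongrightarrow> c0 j"
    and mu_lim: "\<And>j. j \<in> A \<Longrightarrow> (\<lambda>m. mu m j) \<longlonglongrightarrow> mu0 j"
  shows "(\<lambda>m. cayley_sum (c m) (mu m) A n) \<longlonglongrightarrow> cayley_sum c0 mu0 A n"
  unfolding cayley_sum_def
proof (rule infsum_dominated_convergence[where b = "\<lambda>j. b j * sqrt 2"])
  show "(\<lambda>j. b j * sqrt 2) summable_on A"
    using b by (rule summable_on_cmult_left)
next
  fix m j assume j: "j \<in> A"
  show "norm (c m j * cayley_kernel (mu m j) n) \<le> b j * sqrt 2"
    unfolding norm_mult using bound[OF j, of m] norm_cayley_kernel_le_sqrt2[OF Re_nonneg(1)[OF j]]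
      order_trans[OF norm_ge_zero bound[OF j]]
    by (intro mult_mono) auto
next
  fix j assume j: "j \<in> A"
  have "1 + mu0 j \<noteq> 0"
    using Re_nonneg(2)[OF j] by (rule one_plus_neq_zero_of_Re_nonneg)
  then show "(\<lambda>m. c m j * cayley_kernel (mu m j) n) \<longlonglongrightarrow> c0 j * cayley_kernel (mu0 j) n"
    unfolding cayley_kernel_def hmap_def by (intro tendsto_intros c_lim mu_lim j) auto
qed

lemma exp_sum_measurable:
  assumes A: "countable A" and c: "(\<lambda>j. cmod (c j)) summable_on A"
    and Re_nonneg: "\<forall>j\<in>A. 0 \<le> Re (mu j)"
  shows "(\<lambda>t. indicator {0..} t * (cmod (exp_sum c mu A t))^2) \<in> borel_measurable borel"
proof -
  obtain F where F: "\<And>m. finite (F m)" "\<And>m. F m \<subseteq> A"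
    and ev: "\<And>j. j \<in> A \<Longrightarrow> eventually (\<lambda>m. j \<in> F m) sequentially"
    using countable_finite_exhaustion[OF A] by blast
  have "(\<lambda>t. indicator {0..} t * (cmod (exp_sum c mu (F m) t))^2) \<in> borel_measurable borel" for m
  proof -
    have "continuous_on UNIV (exp_sum c mu (F m))"
      unfolding exp_sum_def infsum_finite[OF F(1)] by (intro continuous_intros)
    then have "exp_sum c mu (F m) \<in> borel_measurable borel"
      by (rule borel_measurable_continuous_onI)
    then show ?thesis by measurable
  qed
  moreover have "(\<lambda>m. indicator {0..} t * (cmod (exp_sum c mu (F m) t))^2)
      \<longlonglongrightarrow> indicator {0..} t * (cmod (exp_sum c mu A t))^2" for t
  proof (cases "0 \<le> t")
    case True
    have "(\<lambda>m. exp_sum (\<lambda>j. if j \<in> F m then c j else 0) mu A t) \<longlonglongrightarrow> exp_sum c mu A t"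
    proof (rule exp_sum_tendsto[where c = "\<lambda>m j. if j \<in> F m then c j else 0" and mu = "\<lambda>_. mu",
          OF c _ _ _ _ True])
      show "(\<lambda>m. if j \<in> F m then c j else 0) \<longlonglongrightarrow> c j" if "j \<in> A" for j
        by (rule tendsto_eventually, rule eventually_mono[OF ev[OF that]]) simp
    qed (use Re_nonneg in auto)
    then show ?thesis
      unfolding exp_sum_restrict[OF F(2)] by (intro tendsto_intros)
  qed simp
  ultimately show ?thesis
    by (rule borel_measurable_LIMSEQ_metric)
qed

lemma norm_exp_sum_squared_le:
  assumes b: "b summable_on A" and bound: "\<And>j. j \<in> A \<Longrightarrow> cmod (c j) \<le> b j"
    and Re_ge: "\<forall>j\<in>A. d \<le> Re (mu j)" and t: "0 \<le> t"
  shows "(cmod (exp_sum c mu A t))^2 \<le> (infsum b A)^2 * exp (- (2 * d) * t)"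
proof -
  have term_le: "norm (c j * exp (- mu j * complex_of_real t)) \<le> b j * exp (- d * t)" if "j \<in> A" for j
    unfolding norm_mult using bound[OF that] norm_exp_minus_le[of d "mu j" t] Re_ge t that
      order_trans[OF norm_ge_zero bound[OF that]]
    by (intro mult_mono) auto
  have summable: "(\<lambda>j. norm (c j * exp (- mu j * complex_of_real t))) summable_on A"
    using Infinite_Sum.abs_summable_on_comparison_test'[OF summable_on_cmult_left[OF b] term_le] .
  have "cmod (exp_sum c mu A t) \<le> (\<Sum>\<^sub>\<infinity>j\<in>A. norm (c j * exp (- mu j * complex_of_real t)))"
    unfolding exp_sum_def using summable by (rule norm_infsum_bound)
  also have "\<dots> \<le> (\<Sum>\<^sub>\<infinity>j\<in>A. b j * exp (- d * t))"
    using summable summable_on_cmult_left[OF b] term_le by (rule infsum_mono)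
  also have "\<dots> = infsum b A * exp (- d * t)"
    by (rule infsum_cmult_left')
  finally have "(cmod (exp_sum c mu A t))^2 \<le> (infsum b A * exp (- d * t))^2"
    by (intro power_mono) auto
  also have "\<dots> = (infsum b A)^2 * exp (- (2 * d) * t)"
    by (simp add: power_mult_distrib exp_double[symmetric] algebra_simps)
  finally show ?thesis .
qed

lemma norm_cayley_sum_squared_le:
  assumes b: "b summable_on A" and bound: "\<And>j. j \<in> A \<Longrightarrow> cmod (c j) \<le> b j"
    and Re_nonneg: "\<forall>j\<in>A. 0 \<le> Re (mu j)" and q: "\<forall>j\<in>A. cmod (hmap (mu j)) \<le> q"
  shows "(cmod (cayley_sum c mu A n))^2 \<le> 2 * (infsum b A)^2 * (q^2) ^ n"
proof -
  have "cmod (cayley_kernel (mu j) n) \<le> sqrt 2 * q ^ n" if "j \<in> A" for j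
  proof -
    have "cmod (cayley_kernel (mu j) n) \<le> sqrt 2 * cmod (hmap (mu j)) ^ n"
      using Re_nonneg that by (intro norm_cayley_kernel_le) auto
    also have "\<dots> \<le> sqrt 2 * q ^ n"
      using q that by (intro mult_left_mono power_mono) auto
    finally show ?thesis .
  qed
  then have term_le: "norm (c j * cayley_kernel (mu j) n) \<le> b j * (sqrt 2 * q ^ n)" if "j \<in> A" for j
    unfolding norm_mult using bound[OF that] that order_trans[OF norm_ge_zero bound[OF that]]
    by (intro mult_mono) auto
  have summable: "(\<lambda>j. norm (c j * cayley_kernel (mu j) n)) summable_on A"
    using Infinite_Sum.abs_summable_on_comparison_test'[OF summable_on_cmult_left[OF b] term_le] .
  have "cmod (cayley_sum c mu A n) \<le> (\<Sum>\<^sub>\<infinity>j\<in>A. norm (c j * cayley_kernel (mu j) n))"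
    unfolding cayley_sum_def using summable by (rule norm_infsum_bound)
  also have "\<dots> \<le> (\<Sum>\<^sub>\<infinity>j\<in>A. b j * (sqrt 2 * q ^ n))"
    using summable summable_on_cmult_left[OF b] term_le by (rule infsum_mono)
  also have "\<dots> = infsum b A * (sqrt 2 * q ^ n)"
    by (rule infsum_cmult_left')
  finally have "(cmod (cayley_sum c mu A n))^2 \<le> (infsum b A * (sqrt 2 * q ^ n))^2"
    by (intro power_mono) auto
  also have "\<dots> = 2 * (infsum b A)^2 * (q^2) ^ n"
    by (simp add: power_mult_distrib power_mult[symmetric] mult.commute)
  finally show ?thesis .
qed

lemma exp_sum_energy_tendsto:
  assumes A: "countable A" and b: "b summable_on A"
    and bound: "\<And>m j. j \<in> A \<Longrightarrow> cmod (c m j) \<le> b j"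
    and lim: "\<And>j. j \<in> A \<Longrightarrow> (\<lambda>m. c m j) \<longlonglongrightarrow> c0 j"
    and d: "0 < d" "\<forall>j\<in>A. d \<le> Re (mu j)"
  shows "(\<lambda>m. exp_sum_energy (c m) mu A) \<longlonglongrightarrow> exp_sum_energy c0 mu A"
proof -
  have bound0: "cmod (c0 j) \<le> b j" if "j \<in> A" for j
    using lim[OF that] bound[OF that] by (intro LIMSEQ_le_const2[OF tendsto_norm]) auto
  have Re_nonneg: "\<forall>j\<in>A. 0 \<le> Re (mu j)"
    using d by force
  define K where "K = infsum b A"
  define w where "w t = ennreal (K^2 * exp (- (2 * d) * t)) * indicator {0..} t" for t
  show ?thesis
    unfolding exp_sum_energy_eq_nn_integral
  proof (rule nn_integral_dominated_convergence[where w = w])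
    show "(\<lambda>t. ennreal (indicator {0..} t * (cmod (exp_sum (c m) mu A t))^2)) \<in> borel_measurable lborel" for m
      using exp_sum_measurable[OF A Infinite_Sum.abs_summable_on_comparison_test'[OF b bound] Re_nonneg]
      by measurable
    show "(\<lambda>t. ennreal (indicator {0..} t * (cmod (exp_sum c0 mu A t))^2)) \<in> borel_measurable lborel"
      using exp_sum_measurable[OF A Infinite_Sum.abs_summable_on_comparison_test'[OF b bound0] Re_nonneg]
      by measurable
    show "w \<in> borel_measurable lborel"
      unfolding w_def by measurable
    show "AE t in lborel. ennreal (indicator {0..} t * (cmod (exp_sum (c m) mu A t))^2) \<le> w t" for m
      using norm_exp_sum_squared_le[OF b bound d(2)]
      by (intro AE_I2) (auto simp: w_def K_def split: split_indicator intro!: ennreal_leI)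
    have "((\<lambda>t. K^2 * exp (- (2 * d) * t)) has_integral K^2 * (exp (- (2 * d) * 0) / (2 * d))) {0..}"
      using d by (intro has_integral_mult_right has_integral_exp_minus_to_infinity) simp
    then show "integral\<^sup>N lborel w < \<infinity>"
      unfolding w_def by (subst nn_integral_has_integral_lebesgue') auto
    show "AE t in lborel. (\<lambda>m. ennreal (indicator {0..} t * (cmod (exp_sum (c m) mu A t))^2))
        \<longlonglongrightarrow> ennreal (indicator {0..} t * (cmod (exp_sum c0 mu A t))^2)"
    proof (rule AE_I2, rule tendsto_ennrealI)
      fix t :: real
      show "(\<lambda>m. indicator {0..} t * (cmod (exp_sum (c m) mu A t))^2)
          \<longlonglongrightarrow> indicator {0..} t * (cmod (exp_sum c0 mu A t))^2"
      proof (cases "0 \<le> t")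
        case True
        then show ?thesis
          using Re_nonneg
          by (intro tendsto_intros exp_sum_tendsto[OF b bound, where mu = "\<lambda>_. mu"] lim) auto
      qed simp
    qed
  qed
qed

lemma cayley_sum_energy_tendsto:
  assumes b: "b summable_on A"
    and bound: "\<And>m j. j \<in> A \<Longrightarrow> cmod (c m j) \<le> b j"
    and lim: "\<And>j. j \<in> A \<Longrightarrow> (\<lambda>m. c m j) \<longlonglongrightarrow> c0 j"
    and Re_nonneg: "\<forall>j\<in>A. 0 \<le> Re (mu j)"
    and q: "0 \<le> q" "q < 1" "\<forall>j\<in>A. cmod (hmap (mu j)) \<le> q"
  shows "(\<lambda>m. cayley_sum_energy (c m) mu A) \<longlonglongrightarrow> cayley_sum_energy c0 mu A"
proof -
  define K where "K = infsum b A"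
  have summable: "summable (\<lambda>n. 2 * K^2 * (q^2) ^ n)"
    using q by (intro summable_mult summable_geometric) (simp add: abs_square_less_1)
  show ?thesis
    unfolding cayley_sum_energy_eq_nn_integral
  proof (rule nn_integral_dominated_convergence[where w = "\<lambda>n. ennreal (2 * K^2 * (q^2) ^ n)"])
    show "AE n in count_space UNIV. ennreal ((cmod (cayley_sum (c m) mu A n))^2) \<le> ennreal (2 * K^2 * (q^2) ^ n)" for m
      unfolding K_def by (intro AE_I2 ennreal_leI norm_cayley_sum_squared_le[OF b bound Re_nonneg q(3)])
    show "(\<integral>\<^sup>+n. ennreal (2 * K^2 * (q^2) ^ n) \<partial>count_space UNIV) < \<infinity>"
      using summable by (simp add: nn_integral_count_space_nat suminf_ennreal2)
    show "AE n in count_space UNIV. (\<lambda>m. ennreal ((cmod (cayley_sum (c m) mu A n))^2))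
        \<longlonglongrightarrow> ennreal ((cmod (cayley_sum c0 mu A n))^2)"
      using Re_nonneg
      by (intro AE_I2 tendsto_ennrealI tendsto_intros cayley_sum_tendsto[OF b bound, where mu = "\<lambda>_. mu"] lim) auto
  qed simp_all
qed

lemma exp_sum_energy_le_of_tendsto:
  assumes A: "countable A" and c: "\<And>m. (\<lambda>j. cmod (c m j)) summable_on A"
    and mu: "\<And>m. \<forall>j\<in>A. 0 \<le> Re (mu m j)"
    and lim: "\<And>t. 0 \<le> t \<Longrightarrow> (\<lambda>m. exp_sum (c m) (mu m) A t) \<longlonglongrightarrow> exp_sum c0 mu0 A t"
    and bound: "\<And>m. exp_sum_energy (c m) (mu m) A \<le> B"
  shows "exp_sum_energy c0 mu0 A \<le> B"
  unfolding exp_sum_energy_eq_nn_integral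
proof (rule nn_integral_le_of_tendsto[where f = "\<lambda>m t. ennreal (indicator {0..} t * (cmod (exp_sum (c m) (mu m) A t))^2)"])
  show "(\<lambda>t. ennreal (indicator {0..} t * (cmod (exp_sum (c m) (mu m) A t))^2)) \<in> borel_measurable lborel" for m
    using exp_sum_measurable[OF A c mu] by measurable
  show "(\<lambda>m. ennreal (indicator {0..} t * (cmod (exp_sum (c m) (mu m) A t))^2))
      \<longlonglongrightarrow> ennreal (indicator {0..} t * (cmod (exp_sum c0 mu0 A t))^2)" for t
  proof (cases "0 \<le> t")
    case True
    then show ?thesis by (intro tendsto_ennrealI tendsto_intros lim)
  qed simp
  show "(\<integral>\<^sup>+t. ennreal (indicator {0..} t * (cmod (exp_sum (c m) (mu m) A t))^2) \<partial>lborel) \<le> B" for m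
    using bound[of m] unfolding exp_sum_energy_eq_nn_integral .
qed

lemma cayley_sum_energy_le_of_tendsto:
  assumes lim: "\<And>n. (\<lambda>m. cayley_sum (c m) (mu m) A n) \<longlonglongrightarrow> cayley_sum c0 mu0 A n"
    and bound: "\<And>m. cayley_sum_energy (c m) (mu m) A \<le> B"
  shows "cayley_sum_energy c0 mu0 A \<le> B"
  unfolding cayley_sum_energy_eq_nn_integral
proof (rule nn_integral_le_of_tendsto[where f = "\<lambda>m n. ennreal ((cmod (cayley_sum (c m) (mu m) A n))^2)"])
  show "(\<lambda>m. ennreal ((cmod (cayley_sum (c m) (mu m) A n))^2)) \<longlonglongrightarrow> ennreal ((cmod (cayley_sum c0 mu0 A n))^2)"
    for n by (intro tendsto_ennrealI tendsto_intros lim)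
  show "(\<integral>\<^sup>+n. ennreal ((cmod (cayley_sum (c m) (mu m) A n))^2) \<partial>count_space UNIV) \<le> B" for m
    using bound[of m] unfolding cayley_sum_energy_eq_nn_integral .
qed simp

lemma exp_sum_energy_eq_cayley_sum_energy_uniform:
  assumes A: "countable A" and c: "(\<lambda>j. cmod (c j)) summable_on A"
    and d: "0 < d" "\<forall>j\<in>A. d \<le> Re (mu j)"
    and q: "0 \<le> q" "q < 1" "\<forall>j\<in>A. cmod (hmap (mu j)) \<le> q"
  shows "exp_sum_energy c mu A = cayley_sum_energy c mu A"
proof -
  obtain F where F: "\<And>m. finite (F m)" "\<And>m. F m \<subseteq> A"
    and ev: "\<And>j. j \<in> A \<Longrightarrow> eventually (\<lambda>m. j \<in> F m) sequentially"
    using countable_finite_exhaustion[OF A] by blast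
  define c' where "c' m = (\<lambda>j. if j \<in> F m then c j else 0)" for m
  have bound: "cmod (c' m j) \<le> cmod (c j)" for m j
    by (simp add: c'_def)
  have lim: "(\<lambda>m. c' m j) \<longlonglongrightarrow> c j" if "j \<in> A" for j
    unfolding c'_def by (rule tendsto_eventually, rule eventually_mono[OF ev[OF that]]) simp
  have "exp_sum_energy (c' m) mu A = cayley_sum_energy (c' m) mu A" for m
  proof -
    have pos: "\<forall>j\<in>F m. 0 < Re (mu j)"
      using d F(2) by fastforce
    have "exp_sum_energy (c' m) mu A = exp_sum_energy c mu (F m)"
      unfolding exp_sum_energy_def c'_def exp_sum_restrict[OF F(2)] ..
    also have "\<dots> = cayley_sum_energy c mu (F m)"
      unfolding exp_sum_energy_finite[OF F(1) pos] cayley_sum_energy_finite[OF F(1) pos] ..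
    also have "\<dots> = cayley_sum_energy (c' m) mu A"
      unfolding cayley_sum_energy_def c'_def cayley_sum_restrict[OF F(2)] ..
    finally show ?thesis .
  qed
  then have "(\<lambda>m. cayley_sum_energy (c' m) mu A) \<longlonglongrightarrow> exp_sum_energy c mu A"
    using exp_sum_energy_tendsto[OF A c bound lim d] by simp
  moreover have "(\<lambda>m. cayley_sum_energy (c' m) mu A) \<longlonglongrightarrow> cayley_sum_energy c mu A"
  proof (rule cayley_sum_energy_tendsto[OF c bound lim _ q])
    show "\<forall>j\<in>A. 0 \<le> Re (mu j)"
    proof
      fix j assume "j \<in> A"
      then have "d \<le> Re (mu j)" using d(2) by blast
      then show "0 \<le> Re (mu j)" using d(1) by linarith
    qed
  qed
  ultimately show ?thesis
    by (rule LIMSEQ_unique)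
qed

lemma exp_sum_energy_shift_le:
  assumes "0 \<le> e"
  shows "exp_sum_energy c (\<lambda>j. mu j + of_real e) A \<le> exp_sum_energy c mu A"
  unfolding exp_sum_energy_def
proof (rule nn_integral_mono)
  fix t :: real
  have "cmod (exp_sum c (\<lambda>j. mu j + of_real e) A t) = exp (- (e * t)) * cmod (exp_sum c mu A t)"
    by (simp add: exp_sum_shift norm_mult norm_exp_eq_Re)
  moreover have "0 \<le> t \<Longrightarrow> exp (- (e * t)) \<le> 1"
    using assms by simp
  ultimately have "0 \<le> t \<Longrightarrow> (cmod (exp_sum c (\<lambda>j. mu j + of_real e) A t))^2 \<le> (cmod (exp_sum c mu A t))^2"
    by (simp add: power_mono mult_left_le_one_le)
  then show "ennreal ((cmod (exp_sum c (\<lambda>j. mu j + of_real e) A t))^2) * indicator {0..} t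
      \<le> ennreal ((cmod (exp_sum c mu A t))^2) * indicator {0..} t"
    by (auto simp: indicator_def ennreal_leI)
qed

lemma cayley_sum_energy_rescale_le:
  assumes pos: "\<forall>j\<in>A. 0 < Re (mu j)" and r: "0 \<le> r" "r < 1"
  shows "cayley_sum_energy (\<lambda>j. cayley_rescale_factor r (mu j) * c j) (\<lambda>j. cayley_rescale r (mu j)) A
    \<le> cayley_sum_energy c mu A"
  unfolding cayley_sum_energy_eq_nn_integral
proof (rule nn_integral_mono, rule ennreal_leI)
  fix n
  have "cayley_sum (\<lambda>j. cayley_rescale_factor r (mu j) * c j) (\<lambda>j. cayley_rescale r (mu j)) A n
      = of_real (r ^ n) * cayley_sum c mu A n"
    unfolding cayley_sum_def infsum_cmult_right'[symmetric]
  proof (rule infsum_cong)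
    fix j assume "j \<in> A"
    then have "cayley_rescale_factor r (mu j) * cayley_kernel (cayley_rescale r (mu j)) n
        = of_real (r ^ n) * cayley_kernel (mu j) n"
      using pos r by (intro cayley_kernel_rescale) auto
    then show "cayley_rescale_factor r (mu j) * c j * cayley_kernel (cayley_rescale r (mu j)) n
        = of_real (r ^ n) * (c j * cayley_kernel (mu j) n)"
      by (metis mult.assoc mult.commute)
  qed
  then have "cmod (cayley_sum (\<lambda>j. cayley_rescale_factor r (mu j) * c j) (\<lambda>j. cayley_rescale r (mu j)) A n)
      = r ^ n * cmod (cayley_sum c mu A n)"
    using r by (simp add: norm_mult norm_power)
  also have "\<dots> \<le> cmod (cayley_sum c mu A n)"
    using r by (intro mult_left_le_one_le power_le_one) auto
  finally show "(cmod (cayley_sum (\<lambda>j. cayley_rescale_factor r (mu j) * c j) (\<lambda>j. cayley_rescale r (mu j)) A n))^2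
      \<le> (cmod (cayley_sum c mu A n))^2"
    by (intro power_mono) auto
qed

lemma cayley_sum_energy_le_exp_sum_energy:
  assumes A: "countable A" and c: "(\<lambda>j. cmod (c j)) summable_on A"
    and pos: "\<forall>j\<in>A. 0 < Re (mu j)" and bdd: "bounded (mu ` A)"
  shows "cayley_sum_energy c mu A \<le> exp_sum_energy c mu A"
proof -
  obtain M where M: "0 < M" "\<forall>j\<in>A. cmod (mu j) \<le> M"
    using bdd by (auto simp: bounded_pos)
  define e where "e m = 1 / real (Suc m)" for m
  have e: "0 < e m" "e m \<le> 1" for m
    by (auto simp: e_def)
  define mu' where "mu' m j = mu j + of_real (e m)" for m j
  have Re_mu': "e m \<le> Re (mu' m j)" if "j \<in> A" for m j
    using pos that by (auto simp: mu'_def less_imp_le)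
  have norm_mu': "cmod (mu' m j) \<le> M + 1" if "j \<in> A" for m j
    using norm_triangle_ineq[of "mu j" "of_real (e m)"] M(2) e[of m] that by (auto simp: mu'_def)
  have mu'_lim: "(\<lambda>m. mu' m j) \<longlonglongrightarrow> mu j" for j
  proof -
    have "e \<longlonglongrightarrow> 0"
      unfolding e_def by (rule LIMSEQ_Suc[OF lim_inverse_n'])
    then show ?thesis
      unfolding mu'_def using tendsto_add[OF tendsto_const tendsto_of_real] by fastforce
  qed
  have energy_eq: "exp_sum_energy c (mu' m) A = cayley_sum_energy c (mu' m) A" for m
  proof -
    obtain q where q: "0 \<le> q" "q < 1" "\<And>z. e m \<le> Re z \<Longrightarrow> cmod z \<le> M + 1 \<Longrightarrow> cmod (hmap z) \<le> q"
      using norm_hmap_uniform_bound[of "e m" "M + 1"] e[of m] M(1) by auto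
    show ?thesis
      by (rule exp_sum_energy_eq_cayley_sum_energy_uniform[OF A c e(1) _ q(1,2)])
        (use Re_mu' norm_mu' q(3) in auto)
  qed
  have energy_le: "exp_sum_energy c (mu' m) A \<le> exp_sum_energy c mu A" for m
    unfolding mu'_def using e(1)[of m] by (intro exp_sum_energy_shift_le) simp
  have Re_mu'_nonneg: "0 \<le> Re (mu' m j)" if "j \<in> A" for m j
    using Re_mu'[OF that, of m] e(1)[of m] by linarith
  have lim: "(\<lambda>m. cayley_sum c (mu' m) A n) \<longlonglongrightarrow> cayley_sum c mu A n" for n
    by (rule cayley_sum_tendsto[where c = "\<lambda>_. c", OF c _ _ _ _ mu'_lim])
       (use Re_mu'_nonneg pos in \<open>auto simp: less_imp_le\<close>)
  have "cayley_sum_energy c (mu' m) A \<le> exp_sum_energy c mu A" for m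
    using energy_eq[of m] energy_le[of m] by simp
  then show ?thesis
    by (rule cayley_sum_energy_le_of_tendsto[where c = "\<lambda>_. c" and mu = mu', OF lim])
qed

lemma exp_sum_energy_le_cayley_sum_energy:
  assumes A: "countable A" and c: "(\<lambda>j. cmod (c j)) summable_on A"
    and pos: "\<forall>j\<in>A. 0 < Re (mu j)"
  shows "exp_sum_energy c mu A \<le> cayley_sum_energy c mu A"
proof -
  define r where "r m = real (Suc m) / real (Suc (Suc m))" for m
  have r: "0 < r m" "r m < 1" for m
    by (auto simp: r_def)
  have r_lim: "r \<longlonglongrightarrow> 1"
    unfolding r_def[abs_def] by (rule LIMSEQ_Suc[OF LIMSEQ_n_over_Suc_n])
  define c' where "c' m j = cayley_rescale_factor (r m) (mu j) * c j" for m j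
  define nu where "nu m j = cayley_rescale (r m) (mu j)" for m j
  have c'_bound: "cmod (c' m j) \<le> 2 * cmod (c j)" if "j \<in> A" for m j
    unfolding c'_def norm_mult
    using norm_cayley_rescale_factor_le[OF _ r] pos that by (intro mult_right_mono) auto
  have c'_summable: "(\<lambda>j. cmod (c' m j)) summable_on A" for m
    using Infinite_Sum.abs_summable_on_comparison_test'[OF summable_on_cmult_right[OF c] c'_bound] by simp
  have d: "0 < (1 - (r m)^2) / 4" for m
    using r[of m] by (simp add: abs_square_less_1)
  have Re_nu: "(1 - (r m)^2) / 4 \<le> Re (nu m j)" if "j \<in> A" for m j
    unfolding nu_def using pos that r[of m] by (intro Re_cayley_rescale_ge) auto
  have Re_nu_nonneg: "\<forall>j\<in>A. 0 \<le> Re (nu m j)" for m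
    using Re_nu d[of m] by (meson less_imp_le order_trans)
  have energy_eq: "exp_sum_energy (c' m) (nu m) A = cayley_sum_energy (c' m) (nu m) A" for m
    by (rule exp_sum_energy_eq_cayley_sum_energy_uniform[OF A c'_summable d _ _ r(2)])
      (use Re_nu pos r in \<open>auto simp: nu_def less_imp_le intro: norm_hmap_cayley_rescale\<close>)
  have energy_le: "cayley_sum_energy (c' m) (nu m) A \<le> cayley_sum_energy c mu A" for m
    unfolding c'_def[abs_def] nu_def[abs_def] using pos r[of m] by (intro cayley_sum_energy_rescale_le) auto
  have lim: "(\<lambda>m. exp_sum (c' m) (nu m) A t) \<longlonglongrightarrow> exp_sum c mu A t" if "0 \<le> t" for t
  proof (rule exp_sum_tendsto[OF summable_on_cmult_right[OF c] c'_bound _ _ _ that])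
    show "0 \<le> Re (nu m j)" if "j \<in> A" for m j
      using Re_nu_nonneg that by blast
    show "(\<lambda>m. c' m j) \<longlonglongrightarrow> c j" if "j \<in> A" for j
      using tendsto_mult_right[OF cayley_rescale_tendsto(2)[of "mu j" r], of "c j"] pos that r_lim
      by (simp add: c'_def)
    show "(\<lambda>m. nu m j) \<longlonglongrightarrow> mu j" if "j \<in> A" for j
      using cayley_rescale_tendsto(1)[of "mu j" r] pos that r_lim by (simp add: nu_def)
  qed
  have "exp_sum_energy (c' m) (nu m) A \<le> cayley_sum_energy c mu A" for m
    using energy_eq[of m] energy_le[of m] by simp
  with A c'_summable Re_nu_nonneg lim show ?thesis
    by (rule exp_sum_energy_le_of_tendsto)
qed

theorem exp_sum_energy_eq_cayley_sum_energy:
  assumes "countable A" "(\<lambda>j. cmod (c j)) summable_on A"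
    and "\<forall>j\<in>A. 0 < Re (mu j)" "bounded (mu ` A)"
  shows "exp_sum_energy c mu A = cayley_sum_energy c mu A"
  using assms by (intro antisym exp_sum_energy_le_cayley_sum_energy cayley_sum_energy_le_exp_sum_energy)

section \<open>The frame sums\<close>

lemma exp_series_complex:
  "(\<Sum>n. (complex_of_real t ^ n / of_nat (fact n)) * z ^ n) = exp (complex_of_real t * z)"
  unfolding exp_def by (simp add: scaleR_conv_of_real power_mult_distrib divide_inverse mult_ac)

lemma l2_inner_expA:
  "l2_inner J f (expA lam t g) = exp_sum (\<lambda>j. f j * cnj (g j)) (\<lambda>j. cnj (lam j)) J t"
  unfolding l2_inner_def expA_def exp_sum_def exp_series_complex
  by (intro infsum_cong) (simp add: exp_cnj mult_ac)

lemma l2_inner_Bpow_avec: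
  "l2_inner J f (Bpow lam n (avec lam g)) = cayley_sum (\<lambda>j. f j * cnj (g j)) (\<lambda>j. cnj (lam j)) J n"
  unfolding l2_inner_def Bpow_def avec_def cayley_sum_def cayley_kernel_def
  by (intro infsum_cong) (simp add: hmap_cnj[symmetric] mult_ac)

lemma l2_product_summable:
  assumes "f \<in> l2 J" "g \<in> l2 J"
  shows "(\<lambda>j. cmod (f j * cnj (g j))) summable_on J"
proof -
  have "(\<lambda>j. (cmod (f j))^2 + (cmod (g j))^2) summable_on J"
    using assms by (intro summable_on_add) (auto simp: l2_def)
  moreover have "norm (f j * cnj (g j)) \<le> (cmod (f j))^2 + (cmod (g j))^2" for j
    using sum_squares_bound[of "cmod (f j)" "cmod (g j)"]
      mult_nonneg_nonneg[OF norm_ge_zero[of "f j"] norm_ge_zero[of "g j"]]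
    unfolding norm_mult complex_mod_cnj mult.assoc by linarith
  ultimately show ?thesis
    by (rule Infinite_Sum.abs_summable_on_comparison_test')
qed

theorem mainTheorem9:
  fixes J :: "'j set" and I :: "'i set" and lam :: "'j \<Rightarrow> complex"
    and g :: "'i \<Rightarrow> 'j \<Rightarrow> complex"
  assumes "countable J"
    and "countable I"
    and "bounded (lam ` J)"
    and "\<forall>j\<in>J. Re (lam j) > 0"
    and "\<forall>i\<in>I. g i \<in> l2 J"
  shows "semicont_frame J lam I g {0..} \<longleftrightarrow>
         is_frame J (I \<times> (UNIV :: nat set)) (\<lambda>(i, n). Bpow lam n (avec lam (g i)))"
proof -
  have bounded: "bounded ((\<lambda>j. cnj (lam j)) ` J)"
    using bounded_linear_image[OF assms(3) bounded_linear_cnj] by (simp add: image_image)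
  have "(\<Sum>\<^sub>\<infinity>i\<in>I. \<integral>\<^sup>+t\<in>{0..}. ennreal ((cmod (l2_inner J f (expA lam t (g i))))^2) \<partial>lborel)
      = (\<Sum>\<^sub>\<infinity>k\<in>I \<times> UNIV. ennreal ((cmod (l2_inner J f ((\<lambda>(i, n). Bpow lam n (avec lam (g i))) k)))^2))"
    if f: "f \<in> l2 J" for f
  proof -
    have "exp_sum_energy (\<lambda>j. f j * cnj (g i j)) (\<lambda>j. cnj (lam j)) J
        = cayley_sum_energy (\<lambda>j. f j * cnj (g i j)) (\<lambda>j. cnj (lam j)) J" if "i \<in> I" for i
      using assms(1,4,5) f that bounded
      by (intro exp_sum_energy_eq_cayley_sum_energy l2_product_summable) auto
    then show ?thesis
      unfolding infsum_ennreal_Times_nat exp_sum_energy_def cayley_sum_energy_def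
        infsum_nat_ennreal_eq_suminf l2_inner_expA l2_inner_Bpow_avec
      by (intro infsum_cong) (simp add: l2_inner_Bpow_avec)
  qed
  then show ?thesis
    unfolding semicont_frame_def is_frame_def by simp
qed

end
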